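(* Let $d,D,T,V,\mathcal H,g$ be as in the context, with eigenvalues $(\lambda_{\mathsf m})_{\mathsf m\in\mathbb{N}^d}$ and real orthonormal eigenfunctions $(\mathsf f_{\mathsf m})_{\mathsf m\in\mathbb{N}^d}$ of $\mathcal H$. For each $\mathsf m\in\mathbb{N}^d$ let $$\mu_{\mathsf m}(G)=\int_G\mathsf{dx\,dy}\,\mathsf f_{\mathsf m}(\mathsf x)g(\mathsf x,T,\mathsf y)\,e^{T\lambda_{\mathsf m}}\mathsf f_{\mathsf m}(\mathsf y),\qquad G\in\mathcal B(\overline D)\times\mathcal B(\overline D).$$ Then $\mu_{\mathsf m}$ is a signed measure. Moreover, if $\mathcal Z(T):=\sum_{\mathsf n\in\mathbb{N}^d}e^{-T\lambda_{\mathsf n}}<+\infty$, then $\mu_{\mathsf m}(D\times D)=1$.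
   Context: $d\in\mathbb{N}^+$, $D\subset\mathbb{R}^d$ open bounded with sufficiently smooth boundary, $T>0$, $V:D\to\mathbb{R}$ bounded from below with $V\in L^p(D)$, $p\in[1,\infty]$ if $d=1$, $p\in(1,\infty]$ if $d=2$, $p\in[d/2,\infty]$ if $d\ge3$. $\mathcal H=-\frac12\Delta_{\mathsf x}+V$ with Neumann Laplacian is self-adjoint with compact resolvent in $L^2(D)$, pure point spectrum $\lambda_{\mathsf m}\to\infty$ as $|\mathsf m|\to\infty$, and real eigenfunctions $\mathsf f_{\mathsf m}$ forming an orthonormal basis. $g(\mathsf x,t,\mathsf y)$ is the heat kernel of $\mathcal H$ (integral kernel of $e^{-t\mathcal H}$), symmetric and positive on $\overline D\times\overline D$ for $t\in(0,T]$. *)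

theory Defs
  imports "HOL-Analysis.Analysis"
begin

definition real_signed_measure :: "'a measure \<Rightarrow> ('a set \<Rightarrow> real) \<Rightarrow> bool" where
  "real_signed_measure M \<nu> \<longleftrightarrow>
     \<nu> {} = 0 \<and>
     (\<forall>A :: nat \<Rightarrow> 'a set. range A \<subseteq> sets M \<longrightarrow> disjoint_family A \<longrightarrow>
         (\<lambda>n. \<nu> (A n)) sums \<nu> (\<Union>n. A n))"

definition L2_on :: "('n::euclidean_space) set \<Rightarrow> ('n \<Rightarrow> real) \<Rightarrow> bool" where
  "L2_on D u \<longleftrightarrow> u \<in> borel_measurable lborel \<and> set_integrable lborel D (\<lambda>x. (u x)\<^sup>2)"

definition heat_mu ::
  "('n::euclidean_space \<Rightarrow> real) \<Rightarrow> real \<Rightarrow> ('n \<Rightarrow> real \<Rightarrow> 'n \<Rightarrow> real) \<Rightarrow> real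
     \<Rightarrow> ('n \<times> 'n) set \<Rightarrow> real" where
  "heat_mu f lam g T G =
     (LINT z:G|(lborel \<Otimes>\<^sub>M lborel). f (fst z) * g (fst z) T (snd z) * exp (T * lam) * f (snd z))"

end

theory Submission
  imports Defs
begin

text \<open>Let h_m(x, y) = f_m(x) g(x, T, y) e^(T lam_m) f_m(y). Since g > 0, Tonelli bounds the
  integral of |h_m| over D \<times> D by e^(T lam_m) times the integral over D of |f_m| K, where
  K = e^(-T H) |f_m| lies in L^2(D); as |f_m| K \<le> f_m^2 + K^2, h_m is integrable on D \<times> D, and
  also on closure D \<times> closure D because the boundary of D is null. So mu_m, which is
  G \<mapsto> \<integral>_G h_m, is countably additive. By Fubini, mu_m(D \<times> D) equals
  e^(T lam_m) <e^(-T H) f_m, f_m> = e^(T lam_m) e^(-T lam_m) = 1.\<close>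

lemma set_integral_sums:
  fixes f :: "'a \<Rightarrow> 'b::{banach, second_countable_topology}"
  assumes "\<And>i. A i \<in> sets M" and "disjoint_family A" and "set_integrable M (\<Union>i. A i) f"
  shows "(\<lambda>i. LINT x:A i|M. f x) sums (LINT x:(\<Union>i. A i)|M. f x)"
proof -
  have "(\<lambda>n. LINT x:(\<Union>i<n. A i)|M. f x) \<longlonglongrightarrow> (LINT x:(\<Union>n. \<Union>i<n. A i)|M. f x)"
    using assms by (intro set_integral_cont_up) (auto 4 3 simp: incseq_def intro: set_integrable_subset less_le_trans)
  moreover have "(\<Union>n. \<Union>i<n. A i) = (\<Union>i. A i)"
    by blast
  moreover have "(LINT x:(\<Union>i<n. A i)|M. f x) = (\<Sum>i<n. LINT x:A i|M. f x)" for n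
    using assms by (intro set_integral_finite_Union)
      (auto intro: set_integrable_subset disjoint_family_on_mono)
  ultimately show ?thesis
    unfolding sums_def by simp
qed

lemma real_signed_measure_set_integral:
  fixes f :: "'a \<Rightarrow> real"
  assumes "\<Omega> \<in> sets M" and integrable: "set_integrable M \<Omega> f"
  shows "real_signed_measure (restrict_space M \<Omega>) (\<lambda>A. LINT x:A|M. f x)"
  unfolding real_signed_measure_def
proof (intro conjI allI impI)
  show "(LINT x:{}|M. f x) = 0"
    by (simp add: set_lebesgue_integral_def)
  fix A :: "nat \<Rightarrow> 'a set"
  assume "range A \<subseteq> sets (restrict_space M \<Omega>)" and "disjoint_family A"
  moreover have "A \<in> sets (restrict_space M \<Omega>) \<longleftrightarrow> A \<subseteq> \<Omega> \<and> A \<in> sets M" for A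
    using assms(1) by (intro sets_restrict_space_iff) auto
  ultimately show "(\<lambda>n. LINT x:A n|M. f x) sums (LINT x:(\<Union>n. A n)|M. f x)"
    using integrable by (intro set_integral_sums) (auto intro: set_integrable_subset)
qed

lemma set_integrable_cong_set:
  fixes f :: "'a \<Rightarrow> 'b::{banach, second_countable_topology}"
  assumes "set_integrable M A f" and "set_borel_measurable M B f"
    and "AE x in M. x \<in> A \<longleftrightarrow> x \<in> B"
  shows "set_integrable M B f"
  using assms unfolding set_integrable_def set_borel_measurable_def
  by (elim integrable_cong_AE_imp) (auto split: split_indicator)

lemma AE_in_open_iff_in_closure:
  assumes "open D" and "frontier D \<in> null_sets M"
  shows "AE x in M. x \<in> D \<longleftrightarrow> x \<in> closure D"
  by (rule AE_I'[OF assms(2)]) (use assms(1) closure_subset in \<open>auto simp: frontier_def interior_open\<close>)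

lemma (in pair_sigma_finite) AE_in_Times_iff:
  assumes "AE x in M1. x \<in> A \<longleftrightarrow> x \<in> A'" and "AE y in M2. y \<in> B \<longleftrightarrow> y \<in> B'"
  shows "AE z in M1 \<Otimes>\<^sub>M M2. z \<in> A \<times> B \<longleftrightarrow> z \<in> A' \<times> B'"
proof -
  obtain N1 where N1: "N1 \<in> null_sets M1" "{x \<in> space M1. \<not> (x \<in> A \<longleftrightarrow> x \<in> A')} \<subseteq> N1"
    using assms(1) unfolding eventually_ae_filter by blast
  obtain N2 where N2: "N2 \<in> null_sets M2" "{y \<in> space M2. \<not> (y \<in> B \<longleftrightarrow> y \<in> B')} \<subseteq> N2"
    using assms(2) unfolding eventually_ae_filter by blast
  have "N1 \<times> space M2 \<union> space M1 \<times> N2 \<in> null_sets (M1 \<Otimes>\<^sub>M M2)"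
    using N1(1) N2(1) by auto
  then show ?thesis
    by (rule AE_I') (use N1(2) N2(2) in \<open>auto simp: space_pair_measure\<close>)
qed

lemma set_integrable_Times_closure:
  fixes M1 :: "'a::topological_space measure" and M2 :: "'b::topological_space measure"
    and h :: "'a \<times> 'b \<Rightarrow> 'c::{banach, second_countable_topology}"
  assumes "pair_sigma_finite M1 M2"
    and "open A" "frontier A \<in> null_sets M1" "closure A \<in> sets M1"
    and "open B" "frontier B \<in> null_sets M2" "closure B \<in> sets M2"
    and "h \<in> borel_measurable (M1 \<Otimes>\<^sub>M M2)" "set_integrable (M1 \<Otimes>\<^sub>M M2) (A \<times> B) h"
  shows "set_integrable (M1 \<Otimes>\<^sub>M M2) (closure A \<times> closure B) h"
proof (rule set_integrable_cong_set)
  show "AE z in M1 \<Otimes>\<^sub>M M2. z \<in> A \<times> B \<longleftrightarrow> z \<in> closure A \<times> closure B"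
    using assms by (intro pair_sigma_finite.AE_in_Times_iff AE_in_open_iff_in_closure)
  show "set_borel_measurable (M1 \<Otimes>\<^sub>M M2) (closure A \<times> closure B) h"
    using assms unfolding set_borel_measurable_def by measurable
qed (use assms in simp)

lemma set_integrable_mult_of_squares:
  fixes u v :: "'a \<Rightarrow> real"
  assumes [measurable]: "u \<in> borel_measurable M" "v \<in> borel_measurable M" "A \<in> sets M"
    and "set_integrable M A (\<lambda>x. (u x)\<^sup>2)" and "set_integrable M A (\<lambda>x. (v x)\<^sup>2)"
  shows "set_integrable M A (\<lambda>x. u x * v x)"
proof (rule set_integrable_bound)
  show "set_integrable M A (\<lambda>x. (u x)\<^sup>2 + (v x)\<^sup>2)"
    using assms(4,5) by (rule set_integral_add(1))
  show "set_borel_measurable M A (\<lambda>x. u x * v x)"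
    unfolding set_borel_measurable_def by measurable
  have "\<bar>u x * v x\<bar> \<le> (u x)\<^sup>2 + (v x)\<^sup>2" for x
  proof -
    have "2 * (\<bar>u x\<bar> * \<bar>v x\<bar>) \<le> \<bar>u x\<bar>\<^sup>2 + \<bar>v x\<bar>\<^sup>2"
      using sum_squares_bound[of "\<bar>u x\<bar>" "\<bar>v x\<bar>"] by (simp add: mult.assoc)
    moreover have "0 \<le> \<bar>u x\<bar> * \<bar>v x\<bar>"
      by simp
    ultimately show ?thesis
      unfolding abs_mult power2_abs by linarith
  qed
  then show "AE x in M. x \<in> A \<longrightarrow> norm (u x * v x) \<le> norm ((u x)\<^sup>2 + (v x)\<^sup>2)"
    by simp
qed

lemma (in pair_sigma_finite) set_integrable_kernel_form:
  fixes k :: "'a \<Rightarrow> 'b \<Rightarrow> real" and u :: "'a \<Rightarrow> real" and v :: "'b \<Rightarrow> real"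
  assumes [measurable]: "(\<lambda>z. k (fst z) (snd z)) \<in> borel_measurable (M1 \<Otimes>\<^sub>M M2)"
    "u \<in> borel_measurable M1" "v \<in> borel_measurable M2" "A \<in> sets M1" "B \<in> sets M2"
    and k_nonneg: "\<And>x y. x \<in> A \<Longrightarrow> y \<in> B \<Longrightarrow> 0 \<le> k x y"
    and sections: "AE x\<in>A in M1. set_integrable M2 B (\<lambda>y. k x y * v y)"
    and u_square: "set_integrable M1 A (\<lambda>x. (u x)\<^sup>2)"
    and K_square: "set_integrable M1 A (\<lambda>x. (LINT y:B|M2. k x y * \<bar>v y\<bar>)\<^sup>2)"
  shows "set_integrable (M1 \<Otimes>\<^sub>M M2) (A \<times> B) (\<lambda>z. u (fst z) * k (fst z) (snd z) * v (snd z))"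
  unfolding set_integrable_def
proof (rule Fubini_integrable)
  let ?H = "\<lambda>z. indicator (A \<times> B) z *\<^sub>R (u (fst z) * k (fst z) (snd z) * v (snd z))"
  define K where "K x = (LINT y:B|M2. k x y * \<bar>v y\<bar>)" for x
  have K_measurable[measurable]: "K \<in> borel_measurable M1"
    unfolding K_def set_lebesgue_integral_def by measurable
  have section_eq: "?H (x, y) = indicator A x * u x * (indicator B y * (k x y * v y))" for x y
    by (simp split: split_indicator)
  show "?H \<in> borel_measurable (M1 \<Otimes>\<^sub>M M2)"
    by measurable
  have "integrable M2 (\<lambda>y. ?H (x, y))"
    if "x \<in> A \<longrightarrow> set_integrable M2 B (\<lambda>y. k x y * v y)" for x
    unfolding section_eq using that by (cases "x \<in> A") (simp_all add: set_integrable_def)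
  then show "AE x in M1. integrable M2 (\<lambda>y. ?H (x, y))"
    using sections by auto
  have "(\<integral>y. norm (?H (x, y)) \<partial>M2) = indicator A x * (\<bar>u x\<bar> * K x)" for x
  proof -
    have "norm (?H (x, y)) = indicator A x * \<bar>u x\<bar> * (indicator B y * (k x y * \<bar>v y\<bar>))" for y
      using k_nonneg by (auto simp: abs_mult split: split_indicator)
    then show ?thesis
      by (simp add: K_def set_lebesgue_integral_def mult.assoc)
  qed
  moreover have "set_integrable M1 A (\<lambda>x. \<bar>u x\<bar> * K x)"
    using u_square K_square unfolding K_def[symmetric]
    by (intro set_integrable_mult_of_squares) simp_all
  ultimately show "integrable M1 (\<lambda>x. \<integral>y. norm (?H (x, y)) \<partial>M2)"
    by (simp add: set_integrable_def)
qed

lemma (in pair_sigma_finite) set_integral_kernel_form: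
  fixes k :: "'a \<Rightarrow> 'b \<Rightarrow> real" and u :: "'a \<Rightarrow> real" and v :: "'b \<Rightarrow> real"
  assumes "set_integrable (M1 \<Otimes>\<^sub>M M2) (A \<times> B) (\<lambda>z. u (fst z) * k (fst z) (snd z) * v (snd z))"
  shows "(LINT z:A \<times> B|M1 \<Otimes>\<^sub>M M2. u (fst z) * k (fst z) (snd z) * v (snd z))
           = (LINT x:A|M1. (LINT y:B|M2. k x y * v y) * u x)"
proof -
  have "(\<integral>y. indicator (A \<times> B) (x, y) * (u x * k x y * v y) \<partial>M2)
          = indicator A x * ((LINT y:B|M2. k x y * v y) * u x)" for x
  proof -
    have "(\<integral>y. indicator (A \<times> B) (x, y) * (u x * k x y * v y) \<partial>M2)
          = (\<integral>y. (indicator A x * u x) * (indicator B y * (k x y * v y)) \<partial>M2)"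
      by (intro Bochner_Integration.integral_cong) (simp_all add: indicator_times mult_ac)
    also have "\<dots> = indicator A x * u x * (LINT y:B|M2. k x y * v y)"
      by (simp add: set_lebesgue_integral_def)
    finally show ?thesis
      by (simp only: mult_ac)
  qed
  then show ?thesis
    using integral_fst'[OF assms[unfolded set_integrable_def]]
    by (simp add: set_lebesgue_integral_def)
qed

theorem lemma1:
  fixes D :: "(real ^ 'd) set"
    and T :: real
    and lam :: "nat ^ 'd \<Rightarrow> real"
    and f :: "nat ^ 'd \<Rightarrow> real ^ 'd \<Rightarrow> real"
    and g :: "real ^ 'd \<Rightarrow> real \<Rightarrow> real ^ 'd \<Rightarrow> real"
  assumes D_open: "open D" and D_bounded: "bounded D"
    and D_boundary_null: "frontier D \<in> null_sets lborel"
    and T_pos: "T > 0"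
    \<comment> \<open>pure point spectrum, eigenvalues tending to infinity\<close>
    and lam_to_infty: "filterlim lam at_top cofinite"
    \<comment> \<open>real eigenfunctions forming an orthonormal basis of L^2(D)\<close>
    and f_L2: "\<And>m. L2_on D (f m)"
    and f_orthonormal: "\<And>m n. (LINT x:D|lborel. f m x * f n x) = (if m = n then 1 else 0)"
    and f_complete: "\<And>u. L2_on D u \<Longrightarrow> (\<forall>n. (LINT x:D|lborel. u x * f n x) = 0)
                       \<Longrightarrow> (AE x\<in>D in lborel. u x = 0)"
    \<comment> \<open>g is symmetric, positive and jointly measurable on closure D x closure D\<close>
    and g_meas: "\<And>t. t \<in> {0<..T} \<Longrightarrow>
                   (\<lambda>z. g (fst z) t (snd z)) \<in> borel_measurable (lborel \<Otimes>\<^sub>M lborel)"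
    and g_sym: "\<And>x t y. t \<in> {0<..T} \<Longrightarrow> x \<in> closure D \<Longrightarrow> y \<in> closure D \<Longrightarrow>
                   g x t y = g y t x"
    and g_pos: "\<And>x t y. t \<in> {0<..T} \<Longrightarrow> x \<in> closure D \<Longrightarrow> y \<in> closure D \<Longrightarrow>
                   g x t y > 0"
    \<comment> \<open>g(.,t,.) is the integral kernel of exp(-t H), H = sum_n lam_n <.,f_n> f_n\<close>
    and g_kernel: "\<And>t u. t \<in> {0<..T} \<Longrightarrow> L2_on D u \<Longrightarrow>
           (AE x\<in>D in lborel. set_integrable lborel D (\<lambda>y. g x t y * u y)) \<and>
           L2_on D (\<lambda>x. LINT y:D|lborel. g x t y * u y) \<and>
           (\<forall>n. (LINT x:D|lborel. (LINT y:D|lborel. g x t y * u y) * f n x)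
                  = exp (- t * lam n) * (LINT x:D|lborel. u x * f n x))"
  shows "(\<forall>m. real_signed_measure
                 (restrict_space (lborel \<Otimes>\<^sub>M lborel) (closure D \<times> closure D))
                 (heat_mu (f m) (lam m) g T))
       \<and> ((\<lambda>n. exp (- T * lam n)) summable_on UNIV
            \<longrightarrow> (\<forall>m. heat_mu (f m) (lam m) g T (D \<times> D) = 1))"
proof -
  let ?M = "lborel \<Otimes>\<^sub>M lborel :: ((real ^ 'd) \<times> (real ^ 'd)) measure"
  let ?h = "\<lambda>m z. f m (fst z) * g (fst z) T (snd z) * f m (snd z)"
  have T: "T \<in> {0<..T}"
    using T_pos by simp
  have measurable[measurable]: "D \<in> sets lborel" "f m \<in> borel_measurable lborel"
    "(\<lambda>z. g (fst z) T (snd z)) \<in> borel_measurable ?M" for m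
    using D_open f_L2 g_meas[OF T] by (auto simp: L2_on_def)
  have g_nonneg: "0 \<le> g x T y" if "x \<in> D" "y \<in> D" for x y
    using g_pos[OF T] that closure_subset[of D] by (auto intro: less_imp_le)
  have heat_mu_eq: "heat_mu (f m) (lam m) g T = (\<lambda>G. LINT z:G|?M. exp (T * lam m) * ?h m z)" for m
    by (simp add: heat_mu_def fun_eq_iff mult_ac)
  have integrable: "set_integrable ?M (D \<times> D) (?h m)" for m
  proof (rule lborel_pair.set_integrable_kernel_form[where k = "\<lambda>x y. g x T y"])
    show "AE x\<in>D in lborel. set_integrable lborel D (\<lambda>y. g x T y * f m y)"
      using g_kernel[OF T f_L2] by blast
    show "set_integrable lborel D (\<lambda>x. (f m x)\<^sup>2)"
      using f_L2 by (simp add: L2_on_def)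
    show "set_integrable lborel D (\<lambda>x. (LINT y:D|lborel. g x T y * \<bar>f m y\<bar>)\<^sup>2)"
      using g_kernel[OF T, of "\<lambda>y. \<bar>f m y\<bar>"] f_L2[of m] by (simp add: L2_on_def)
  qed (fact measurable g_nonneg)+
  have closure_integrable:
    "set_integrable ?M (closure D \<times> closure D) (\<lambda>z. exp (T * lam m) * ?h m z)" for m
    by (rule set_integrable_Times_closure) (use lborel_pair.pair_sigma_finite_axioms D_open D_boundary_null integrable in simp_all)
  show ?thesis
  proof (intro conjI allI impI)
    fix m
    show "real_signed_measure (restrict_space ?M (closure D \<times> closure D)) (heat_mu (f m) (lam m) g T)"
      unfolding heat_mu_eq using closure_integrable
      by (rule real_signed_measure_set_integral[rotated]) measurable
    show "heat_mu (f m) (lam m) g T (D \<times> D) = 1"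
      using lborel_pair.set_integral_kernel_form[OF integrable] g_kernel[OF T f_L2] f_orthonormal[of m m]
      by (simp add: heat_mu_eq exp_minus_inverse)
  qed
qed

end
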